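(* Let $P$ be the uniform distribution on $[0,1]$ and $\beta=\{\frac14,\frac12\}$. The conditional optimal set of two-points for $P$ with respect to $\beta$ is $\beta$, and $V_2=\frac{37}{768}$ ($\approx0.0481771$).
   Context: For a Borel probability measure $P$ on $\mathbb{R}$ and finite $\beta$ with $\mathrm{card}(\beta)=r$, for $n\ge r$, $V_n=\inf\{\int\min_{a\in\alpha\cup\beta}(x-a)^2dP(x):\mathrm{card}(\alpha)\le n-r\}$; a set $\alpha\cup\beta$ attaining the infimum, with each point of $\beta$ having a Voronoi region of positive $P$-measure, is a conditional optimal set of $n$-points with respect to $\beta$. *)

theory Defs
  imports "HOL-Probability.Probability"
begin

definition distortion :: "real measure \<Rightarrow> real set \<Rightarrow> real" where
  "distortion P A = (\<integral>x. Min ((\<lambda>a. (x - a)\<^sup>2) ` A) \<partial>P)"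

definition cond_V :: "real measure \<Rightarrow> real set \<Rightarrow> nat \<Rightarrow> real" where
  "cond_V P \<beta> n = (INF \<alpha> \<in> {\<alpha>. finite \<alpha> \<and> card \<alpha> \<le> n - card \<beta>}. distortion P (\<alpha> \<union> \<beta>))"

definition voronoi :: "real set \<Rightarrow> real \<Rightarrow> real set" where
  "voronoi S a = {x. \<forall>b\<in>S. \<bar>x - a\<bar> \<le> \<bar>x - b\<bar>}"

definition cond_optimal_set :: "real measure \<Rightarrow> real set \<Rightarrow> nat \<Rightarrow> real set \<Rightarrow> bool" where
  "cond_optimal_set P \<beta> n S \<longleftrightarrow> finite \<beta> \<and> card \<beta> \<le> n \<and>
     (\<exists>\<alpha>. finite \<alpha> \<and> card \<alpha> \<le> n - card \<beta> \<and> S = \<alpha> \<union> \<beta>) \<and>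
     distortion P S = cond_V P \<beta> n \<and>
     (\<forall>b\<in>\<beta>. measure P (voronoi S b) > 0)"

end

theory Submission
  imports Defs
begin

text \<open>Since \<open>card \<beta> = 2 = n\<close>, the only admissible \<open>\<alpha>\<close> is empty, so \<open>V\<^sub>2\<close> is the distortion of
  \<open>\<beta>\<close> itself and \<open>\<beta>\<close> is the only candidate for a conditional optimal set. The distortion is
  computed by splitting \<open>[0,1]\<close> at the midpoint \<open>3/8\<close>, where the nearest point of \<open>\<beta>\<close> changes,
  and the two Voronoi regions \<open>]-\<infinity>,3/8]\<close> and \<open>[3/8,\<infinity>[\<close> both meet \<open>[0,1]\<close> in positive measure.\<close>

lemma cond_V_eq_distortion_of_card_eq:
  assumes "finite \<beta>" "card \<beta> = n"
  shows "cond_V P \<beta> n = distortion P \<beta>"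
proof -
  have only_empty: "{\<alpha> :: real set. finite \<alpha> \<and> card \<alpha> \<le> n - card \<beta>} = {{}}"
    using assms by auto
  show ?thesis
    unfolding cond_V_def only_empty by simp
qed

lemma cond_optimal_set_iff_of_card_eq:
  assumes "finite \<beta>" "card \<beta> = n"
  shows "cond_optimal_set P \<beta> n S \<longleftrightarrow> S = \<beta> \<and> (\<forall>b\<in>\<beta>. measure P (voronoi \<beta> b) > 0)"
  using assms cond_V_eq_distortion_of_card_eq[OF assms]
  unfolding cond_optimal_set_def by auto

lemma voronoi_two_points:
  fixes c d :: real
  assumes "c < d"
  shows "voronoi {c, d} c = {..(c + d) / 2}" and "voronoi {c, d} d = {(c + d) / 2..}"
  using assms unfolding voronoi_def by (auto simp: abs_if)

lemma uniform_measure_interval_eq_density: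
  fixes a b :: real
  assumes "a < b"
  shows "uniform_measure lborel {a..b} = density lborel (\<lambda>x. ennreal (indicator {a..b} x / (b - a)))"
proof -
  have "1 / ennreal (b - a) = ennreal (1 / (b - a))"
    using assms by (metis divide_ennreal ennreal_1 diff_gt_0_iff_gt zero_le_one)
  then show ?thesis
    unfolding uniform_measure_def by (intro density_cong) (auto split: split_indicator)
qed

lemma integral_uniform_measure_interval:
  fixes f :: "real \<Rightarrow> real"
  assumes "a < b" and f_meas: "f \<in> borel_measurable borel" and f_cont: "continuous_on {a..b} f"
  shows "(\<integral>x. f x \<partial>uniform_measure lborel {a..b}) = integral {a..b} f / (b - a)"
proof -
  have "(\<integral>x. f x \<partial>uniform_measure lborel {a..b})
      = (\<integral>x. (indicator {a..b} x / (b - a)) *\<^sub>R f x \<partial>lborel)"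
    unfolding uniform_measure_interval_eq_density[OF \<open>a < b\<close>]
    using \<open>a < b\<close> f_meas by (intro integral_density) auto
  also have "\<dots> = (LINT x : {a..b} | lborel. f x) / (b - a)"
    by (simp add: set_lebesgue_integral_def)
  also have "\<dots> = integral {a..b} f / (b - a)"
    using borel_integrable_atLeastAtMost'[OF f_cont] by (simp add: set_borel_integral_eq_integral(2))
  finally show ?thesis .
qed

lemma has_integral_power2_diff:
  fixes c u v :: real
  assumes "u \<le> v"
  shows "((\<lambda>x. (x - c)\<^sup>2) has_integral ((v - c) ^ 3 - (u - c) ^ 3) / 3) {u..v}"
proof -
  have "((\<lambda>x. (x - c)\<^sup>2) has_integral (v - c) ^ 3 / 3 - (u - c) ^ 3 / 3) {u..v}"
    using assms
    by (intro fundamental_theorem_of_calculus)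
       (auto intro!: derivative_eq_intros simp: power2_eq_square power3_eq_cube field_simps)
  then show ?thesis
    by (simp add: diff_divide_distrib)
qed

lemma has_integral_min_power2_two_points:
  fixes a b c d :: real
  defines "m \<equiv> (c + d) / 2"
  assumes "c < d" "a \<le> m" "m \<le> b"
  shows "((\<lambda>x. min ((x - c)\<^sup>2) ((x - d)\<^sup>2)) has_integral
           ((m - c) ^ 3 - (a - c) ^ 3 + (b - d) ^ 3 - (m - d) ^ 3) / 3) {a..b}"
proof -
  have sq_diff: "(x - d)\<^sup>2 - (x - c)\<^sup>2 = 2 * (d - c) * (m - x)" for x
    unfolding m_def by (simp add: power2_eq_square field_simps)
  have nearest_c: "min ((x - c)\<^sup>2) ((x - d)\<^sup>2) = (x - c)\<^sup>2" if "x \<le> m" for x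
  proof -
    have "0 \<le> 2 * (d - c) * (m - x)"
      using that \<open>c < d\<close> by simp
    then show ?thesis
      using sq_diff[of x] by (simp add: min_absorb1)
  qed
  have nearest_d: "min ((x - c)\<^sup>2) ((x - d)\<^sup>2) = (x - d)\<^sup>2" if "m \<le> x" for x
  proof -
    have "2 * (d - c) * (m - x) \<le> 0"
      using that \<open>c < d\<close> by (simp add: mult_nonneg_nonpos)
    then show ?thesis
      using sq_diff[of x] by (simp add: min_absorb2)
  qed
  have left: "((\<lambda>x. min ((x - c)\<^sup>2) ((x - d)\<^sup>2)) has_integral ((m - c) ^ 3 - (a - c) ^ 3) / 3) {a..m}"
    using has_integral_power2_diff[OF \<open>a \<le> m\<close>] by (rule has_integral_eq[rotated]) (simp add: nearest_c)
  have right: "((\<lambda>x. min ((x - c)\<^sup>2) ((x - d)\<^sup>2)) has_integral ((b - d) ^ 3 - (m - d) ^ 3) / 3) {m..b}"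
    using has_integral_power2_diff[OF \<open>m \<le> b\<close>] by (rule has_integral_eq[rotated]) (simp add: nearest_d)
  have "((m - c) ^ 3 - (a - c) ^ 3) / 3 + ((b - d) ^ 3 - (m - d) ^ 3) / 3
      = ((m - c) ^ 3 - (a - c) ^ 3 + (b - d) ^ 3 - (m - d) ^ 3) / 3"
    by (simp add: field_simps)
  with has_integral_combine[OF \<open>a \<le> m\<close> \<open>m \<le> b\<close> left right] show ?thesis
    by simp
qed

lemma distortion_uniform_measure_two_points:
  fixes a b c d :: real
  defines "m \<equiv> (c + d) / 2"
  assumes "a < b" "c < d" "a \<le> m" "m \<le> b"
  shows "distortion (uniform_measure lborel {a..b}) {c, d}
           = ((m - c) ^ 3 - (a - c) ^ 3 + (b - d) ^ 3 - (m - d) ^ 3) / (3 * (b - a))"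
proof -
  let ?g = "\<lambda>x. min ((x - c)\<^sup>2) ((x - d)\<^sup>2)"
  have g_cont: "continuous_on UNIV ?g"
    by (intro continuous_intros)
  have "distortion (uniform_measure lborel {a..b}) {c, d} = (\<integral>x. ?g x \<partial>uniform_measure lborel {a..b})"
    unfolding distortion_def by simp
  also have "\<dots> = integral {a..b} ?g / (b - a)"
    using g_cont \<open>a < b\<close>
    by (intro integral_uniform_measure_interval)
       (auto intro: borel_measurable_continuous_onI continuous_on_subset)
  also have "\<dots> = ((m - c) ^ 3 - (a - c) ^ 3 + (b - d) ^ 3 - (m - d) ^ 3) / (3 * (b - a))"
    using has_integral_min_power2_two_points[OF assms(3-5)[unfolded m_def]]
    by (simp add: integral_unique m_def)
  finally show ?thesis .
qed

theorem proposition3p1: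
  defines "P \<equiv> uniform_measure lborel {0..1::real}"
      and "\<beta> \<equiv> {1/4, 1/2 :: real}"
  shows "{S. cond_optimal_set P \<beta> 2 S} = {\<beta>} \<and> cond_V P \<beta> 2 = 37/768"
proof -
  have card_\<beta>: "finite \<beta>" "card \<beta> = 2"
    unfolding \<beta>_def by auto
  have "cond_V P \<beta> 2 = distortion P \<beta>"
    using card_\<beta> by (rule cond_V_eq_distortion_of_card_eq)
  also have "\<dots> = 37/768"
    unfolding P_def \<beta>_def
    by (subst distortion_uniform_measure_two_points) (simp_all add: power3_eq_cube)
  finally have V: "cond_V P \<beta> 2 = 37/768" .
  have "{0..1} \<inter> {..3/8} = {0..3/8::real}" "{0..1} \<inter> {3/8..} = {3/8..1::real}"
    by auto
  then have "\<forall>b\<in>\<beta>. measure P (voronoi \<beta> b) > 0"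
    unfolding P_def \<beta>_def using voronoi_two_points[of "1/4" "1/2"] by simp
  then show ?thesis
    using V cond_optimal_set_iff_of_card_eq[OF card_\<beta>] by auto
qed

end
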